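(* Under the setting described in the context, assume that for all $x\in\mathcal{A}$ and all $i\in\{1,\dots,n\}$, $$d_{xi}>0 \implies \phi_{ix}>0.$$ Define $$\tilde J(i)=\sum_{x\in\mathcal{A}}\phi_{ix}\,r^*_x,\qquad i=1,\dots,n,$$ and $$\epsilon=\max_{x\in\mathcal{A}}\ \max_{\{i,j\,:\,\phi_{ix}>0,\ \phi_{jx}>0\}}|J^*(i)-J^*(j)|.$$ Then $$|J^*(i)-\tilde J(i)|\le \frac{\epsilon}{1-\alpha},\qquad i=1,\dots,n.$$
   Context: Consider a discounted Markov decision problem with states $1,\dots,n$. For each state $i$ there is a finite nonempty control set $U(i)$. Under control $u\in U(i)$, the system moves from $i$ to $j$ with probability $p_{ij}(u)$ (with $\sum_j p_{ij}(u)=1$) and incurs cost $g(i,u,j)\in\mathbb{R}$. The cost at stage $k$ is discounted by $\alpha^k$, where $\alpha\in(0,1)$. A (deterministic stationary) policy $\mu$ selects $\mu(i)\in U(i)$ for each $i$. $J_\mu(i)$ denotes the total expected discounted cost of $\mu$ starting from $i$, and $J^*(i)=\min_\mu J_\mu(i)$. Equivalently, $J^*$ is the unique solution of $$J^*(i)=\min_{u\in U(i)}\sum_{j=1}^n p_{ij}(u)\big(g(i,u,j)+\alpha J^*(j)\big),\qquad i=1,\dots,n.$$ Aggregation framework: Let $\mathcal{A}$ be a finite set of "aggregate states". For each $x\in\mathcal{A}$ we are given a probability distribution $\{d_{xi}\}_{i=1}^n$ on $\{1,\dots,n\}$ (the disaggregation probabilities). For each original state $j$ we are given a probability distribution $\{\phi_{jy}\}_{y\in\mathcal{A}}$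 on $\mathcal{A}$ (the aggregation probabilities). Define the operator $H:\mathbb{R}^{\mathcal{A}}\to\mathbb{R}^{\mathcal{A}}$ by $$(Hr)(x)=\sum_{i=1}^n d_{xi}\min_{u\in U(i)}\sum_{j=1}^n p_{ij}(u)\Big(g(i,u,j)+\alpha\sum_{y\in\mathcal{A}}\phi_{jy}\,r_y\Big),\qquad x\in\mathcal{A}.$$ $H$ is a contraction with respect to the maximum norm. Let $r^*=(r^*_x)_{x\in\mathcal{A}}$ be its unique fixed point $r^*=Hr^*$; this is the optimal cost vector of the aggregate problem. *)

theory Defs
  imports Complex_Main
begin

text \<open>Original states: a finite type 's (playing the role of 1..n).
  Aggregate states: a finite type 'a. Controls: elements of type 'c,
  with finite nonempty control sets U i.\<close>

definition Q_factor ::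
  "('s::finite \<Rightarrow> 'c \<Rightarrow> 's \<Rightarrow> real) \<Rightarrow> ('s \<Rightarrow> 'c \<Rightarrow> 's \<Rightarrow> real) \<Rightarrow> real \<Rightarrow>
   ('s \<Rightarrow> real) \<Rightarrow> 's \<Rightarrow> 'c \<Rightarrow> real" where
  "Q_factor p g \<alpha> J i u = (\<Sum>j\<in>UNIV. p i u j * (g i u j + \<alpha> * J j))"

definition bellman_T ::
  "('s::finite \<Rightarrow> 'c set) \<Rightarrow> ('s \<Rightarrow> 'c \<Rightarrow> 's \<Rightarrow> real) \<Rightarrow> ('s \<Rightarrow> 'c \<Rightarrow> 's \<Rightarrow> real) \<Rightarrow> real \<Rightarrow>
   ('s \<Rightarrow> real) \<Rightarrow> 's \<Rightarrow> real" where
  "bellman_T U p g \<alpha> J i = Min (Q_factor p g \<alpha> J i ` U i)"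

definition agg_H ::
  "('s::finite \<Rightarrow> 'c set) \<Rightarrow> ('s \<Rightarrow> 'c \<Rightarrow> 's \<Rightarrow> real) \<Rightarrow> ('s \<Rightarrow> 'c \<Rightarrow> 's \<Rightarrow> real) \<Rightarrow> real \<Rightarrow>
   ('a::finite \<Rightarrow> 's \<Rightarrow> real) \<Rightarrow> ('s \<Rightarrow> 'a \<Rightarrow> real) \<Rightarrow> ('a \<Rightarrow> real) \<Rightarrow> 'a \<Rightarrow> real" where
  "agg_H U p g \<alpha> d \<phi> r x =
     (\<Sum>i\<in>UNIV. d x i * bellman_T U p g \<alpha> (\<lambda>j. \<Sum>y\<in>UNIV. \<phi> j y * r y) i)"

end

theory Submission
  imports Defs
begin

text \<open>Let \<open>D\<close> be the largest error \<open>|J\<^sup>~(i) - J\<^sup>*(i)|\<close>. Since the Bellman operator is an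
  \<open>\<alpha>\<close>-contraction in the maximum norm, applying it to \<open>J\<^sup>~\<close> moves every value within \<open>\<alpha> D\<close> of
  \<open>J\<^sup>*\<close>. The aggregate fixed point \<open>r\<^sup>*\<^sub>x\<close> averages these values over states \<open>i\<close> with
  \<open>d\<^sub>x\<^sub>i > 0\<close>, all of which lie in the footprint of \<open>x\<close>, and \<open>J\<^sup>~(k)\<close> averages the \<open>r\<^sup>*\<^sub>x\<close> over
  aggregate states whose footprint contains \<open>k\<close>. Each averaging costs at most the variation
  \<open>\<epsilon>\<close> of \<open>J\<^sup>*\<close> on a footprint, so \<open>D \<le> \<alpha> D + \<epsilon>\<close>.\<close>

lemma Min_image_abs_diff_le:
  fixes f g :: "'c \<Rightarrow> real"
  assumes "finite U" "U \<noteq> {}" and fg: "\<And>u. u \<in> U \<Longrightarrow> \<bar>f u - g u\<bar> \<le> c"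
  shows "\<bar>Min (f ` U) - Min (g ` U)\<bar> \<le> c"
proof -
  obtain u where u: "u \<in> U" "g u = Min (g ` U)"
    using assms(1,2) by (metis (mono_tags, lifting) Min_in finite_imageI image_iff image_is_empty)
  obtain v where v: "v \<in> U" "f v = Min (f ` U)"
    using assms(1,2) by (metis (mono_tags, lifting) Min_in finite_imageI image_iff image_is_empty)
  have "Min (f ` U) \<le> f u" "Min (g ` U) \<le> g v"
    using u(1) v(1) assms(1) by simp_all
  with fg[OF u(1)] fg[OF v(1)] u(2) v(2) show ?thesis
    by (simp add: abs_le_iff)
qed

lemma convex_comb_abs_diff_le:
  fixes w f :: "'a \<Rightarrow> real"
  assumes "finite A" and w_nonneg: "\<And>x. x \<in> A \<Longrightarrow> w x \<ge> 0" and w_sum: "sum w A = 1"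
    and close: "\<And>x. x \<in> A \<Longrightarrow> w x > 0 \<Longrightarrow> \<bar>f x - c\<bar> \<le> b"
  shows "\<bar>(\<Sum>x\<in>A. w x * f x) - c\<bar> \<le> b"
proof -
  have "(\<Sum>x\<in>A. w x * f x) - c = (\<Sum>x\<in>A. w x * (f x - c))"
    using w_sum by (simp add: sum_subtractf right_diff_distrib sum_distrib_right[symmetric])
  also have "\<bar>\<dots>\<bar> \<le> (\<Sum>x\<in>A. \<bar>w x * (f x - c)\<bar>)"
    by (rule sum_abs)
  also have "\<dots> \<le> (\<Sum>x\<in>A. w x * b)"
  proof (rule sum_mono)
    fix x assume x: "x \<in> A"
    show "\<bar>w x * (f x - c)\<bar> \<le> w x * b"
    proof (cases "w x > 0")
      case True
      then show ?thesis using close[OF x True] by (simp add: abs_mult mult_left_mono)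
    next
      case False
      then show ?thesis using w_nonneg[OF x] by simp
    qed
  qed
  also have "\<dots> = b"
    using w_sum by (simp add: sum_distrib_right[symmetric])
  finally show ?thesis .
qed

lemma Q_factor_abs_diff_le:
  fixes p g :: "'s::finite \<Rightarrow> 'c \<Rightarrow> 's \<Rightarrow> real"
  assumes p_nonneg: "\<And>j. p i u j \<ge> 0" and p_sum: "(\<Sum>j\<in>UNIV. p i u j) = 1"
    and "\<alpha> \<ge> 0" and J_close: "\<And>j. \<bar>J1 j - J2 j\<bar> \<le> D"
  shows "\<bar>Q_factor p g \<alpha> J1 i u - Q_factor p g \<alpha> J2 i u\<bar> \<le> \<alpha> * D"
proof -
  have "Q_factor p g \<alpha> J1 i u - Q_factor p g \<alpha> J2 i u = (\<Sum>j\<in>UNIV. p i u j * (\<alpha> * (J1 j - J2 j)))"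
    unfolding Q_factor_def by (simp add: sum_subtractf[symmetric] algebra_simps)
  also have "\<bar>\<dots> - 0\<bar> \<le> \<alpha> * D"
    using assms by (intro convex_comb_abs_diff_le) (auto simp: abs_mult mult_left_mono)
  finally show ?thesis by simp
qed

lemma bellman_T_abs_diff_le:
  assumes "\<And>i. finite (U i)" "\<And>i. U i \<noteq> {}"
    and "\<And>i u j. u \<in> U i \<Longrightarrow> p i u j \<ge> 0"
    and "\<And>i u. u \<in> U i \<Longrightarrow> (\<Sum>j\<in>UNIV. p i u j) = 1"
    and "\<alpha> \<ge> 0" and "\<And>j. \<bar>J1 j - J2 j\<bar> \<le> D"
  shows "\<bar>bellman_T U p g \<alpha> J1 i - bellman_T U p g \<alpha> J2 i\<bar> \<le> \<alpha> * D"
  unfolding bellman_T_def using assms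
  by (intro Min_image_abs_diff_le Q_factor_abs_diff_le) auto

lemma aggregation_abs_diff_le:
  fixes d :: "'a::finite \<Rightarrow> 's::finite \<Rightarrow> real" and \<phi> :: "'s \<Rightarrow> 'a \<Rightarrow> real"
  assumes d_nonneg: "\<And>x i. d x i \<ge> 0" and d_sum: "\<And>x. (\<Sum>i\<in>UNIV. d x i) = 1"
    and phi_nonneg: "\<And>j y. \<phi> j y \<ge> 0" and phi_sum: "\<And>j. (\<Sum>y\<in>UNIV. \<phi> j y) = 1"
    and support: "\<And>x i. d x i > 0 \<Longrightarrow> \<phi> i x > 0"
    and r_eq: "\<And>x. r x = (\<Sum>i\<in>UNIV. d x i * TJ i)"
    and TJ_close: "\<And>i. \<bar>TJ i - J i\<bar> \<le> \<delta>"
    and footprint: "\<And>i j x. \<phi> i x > 0 \<Longrightarrow> \<phi> j x > 0 \<Longrightarrow> \<bar>J i - J j\<bar> \<le> \<epsilon>"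
  shows "\<bar>(\<Sum>x\<in>UNIV. \<phi> k x * r x) - J k\<bar> \<le> \<delta> + \<epsilon>"
proof (rule convex_comb_abs_diff_le)
  fix x assume "\<phi> k x > 0"
  have "\<bar>TJ i - J k\<bar> \<le> \<delta> + \<epsilon>" if "d x i > 0" for i
    using TJ_close[of i] footprint[OF support[OF that] \<open>\<phi> k x > 0\<close>] by linarith
  then show "\<bar>r x - J k\<bar> \<le> \<delta> + \<epsilon>"
    unfolding r_eq using d_nonneg d_sum by (intro convex_comb_abs_diff_le) auto
qed (use phi_nonneg phi_sum in auto)

lemma le_Max_contraction_bound:
  fixes e :: "'s::finite \<Rightarrow> real"
  assumes "\<alpha> < 1" and self_bound: "\<And>k. e k \<le> \<alpha> * Max (range e) + \<epsilon>"
  shows "e i \<le> \<epsilon> / (1 - \<alpha>)"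
proof -
  have "Max (range e) \<in> range e"
    by (rule Max_in) auto
  then have "(1 - \<alpha>) * Max (range e) \<le> \<epsilon>"
    using self_bound by (auto simp: algebra_simps)
  with \<open>\<alpha> < 1\<close> have "Max (range e) \<le> \<epsilon> / (1 - \<alpha>)"
    by (simp add: pos_le_divide_eq mult.commute)
  moreover have "e i \<le> Max (range e)"
    by simp
  ultimately show ?thesis
    by linarith
qed

theorem mainTheorem1:
  fixes U :: "'s::finite \<Rightarrow> 'c set"
    and p g :: "'s \<Rightarrow> 'c \<Rightarrow> 's \<Rightarrow> real"
    and \<alpha> :: real
    and d :: "'a::finite \<Rightarrow> 's \<Rightarrow> real"
    and \<phi> :: "'s \<Rightarrow> 'a \<Rightarrow> real"
    and Jstar :: "'s \<Rightarrow> real"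
    and rstar :: "'a \<Rightarrow> real"
  assumes U_fin: "\<And>i. finite (U i)" and U_ne: "\<And>i. U i \<noteq> {}"
    and p_nonneg: "\<And>i u j. u \<in> U i \<Longrightarrow> p i u j \<ge> 0"
    and p_sum: "\<And>i u. u \<in> U i \<Longrightarrow> (\<Sum>j\<in>UNIV. p i u j) = 1"
    and alpha: "0 < \<alpha>" "\<alpha> < 1"
    and d_nonneg: "\<And>x i. d x i \<ge> 0" and d_sum: "\<And>x. (\<Sum>i\<in>UNIV. d x i) = 1"
    and phi_nonneg: "\<And>j y. \<phi> j y \<ge> 0" and phi_sum: "\<And>j. (\<Sum>y\<in>UNIV. \<phi> j y) = 1"
    and Jstar_fix: "bellman_T U p g \<alpha> Jstar = Jstar"
    and rstar_fix: "agg_H U p g \<alpha> d \<phi> rstar = rstar"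
    and support: "\<And>x i. d x i > 0 \<Longrightarrow> \<phi> i x > 0"
  shows "\<forall>i. \<bar>Jstar i - (\<Sum>x\<in>UNIV. \<phi> i x * rstar x)\<bar>
           \<le> Max {\<bar>Jstar i' - Jstar j'\<bar> | i' j' x. \<phi> i' x > 0 \<and> \<phi> j' x > 0} / (1 - \<alpha>)"
proof -
  define \<epsilon> where "\<epsilon> = Max {\<bar>Jstar i' - Jstar j'\<bar> | i' j' x. \<phi> i' x > 0 \<and> \<phi> j' x > 0}"
  define J where "J = (\<lambda>j. \<Sum>y\<in>UNIV. \<phi> j y * rstar y)"
  have "finite {\<bar>Jstar i' - Jstar j'\<bar> | i' j' x. \<phi> i' x > 0 \<and> \<phi> j' x > 0}"
    by (rule finite_subset[of _ "(\<lambda>(i, j). \<bar>Jstar i - Jstar j\<bar>) ` UNIV"]) auto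
  then have footprint: "\<bar>Jstar i - Jstar j\<bar> \<le> \<epsilon>" if "\<phi> i x > 0" "\<phi> j x > 0" for i j x
    unfolding \<epsilon>_def using that by (intro Max_ge) auto
  define e where "e = (\<lambda>j. \<bar>J j - Jstar j\<bar>)"
  have "\<bar>bellman_T U p g \<alpha> J i - bellman_T U p g \<alpha> Jstar i\<bar> \<le> \<alpha> * Max (range e)" for i
    unfolding e_def using U_fin U_ne p_nonneg p_sum alpha(1)
    by (intro bellman_T_abs_diff_le) auto
  then have T_close: "\<bar>bellman_T U p g \<alpha> J i - Jstar i\<bar> \<le> \<alpha> * Max (range e)" for i
    using Jstar_fix by simp
  have r_eq: "rstar x = (\<Sum>i\<in>UNIV. d x i * bellman_T U p g \<alpha> J i)" for x
    using fun_cong[OF rstar_fix, of x] unfolding agg_H_def J_def by simp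
  have "e k \<le> \<alpha> * Max (range e) + \<epsilon>" for k
    using aggregation_abs_diff_le[OF d_nonneg d_sum phi_nonneg phi_sum support r_eq T_close footprint]
    unfolding e_def J_def .
  then have "e i \<le> \<epsilon> / (1 - \<alpha>)" for i
    by (rule le_Max_contraction_bound[OF alpha(2)])
  then show ?thesis
    unfolding e_def J_def \<epsilon>_def by (simp add: abs_minus_commute)
qed

end
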